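(* Let $m\in\mathbb{Z}$ be odd and let $(d,v)\in\mathbb{Z}^2$ with $d>0$. There is no decomposition $(d,v)=(d_1,v_1)+(d_2,v_2)$ in $\mathbb{Z}^2$ with $d_1,d_2>0$ satisfying $$\frac{w_1}{d_1}=\frac{w_2}{d_2},\qquad w_1:=v_1-\frac m2d_1d_2,\quad w_2:=v_2+\frac m2d_1d_2,$$ if and only if either $\gcd(d,v)=1$ and $d\not\equiv2\pmod4$, or $\gcd(d,v)=2$ and $d\equiv2\pmod4$. *)

theory Defs
  imports Complex_Main
begin

end

theory Submission
  imports Defs
begin

text \<open>Clearing denominators, with \<open>d\<^sub>2 = d - d\<^sub>1\<close> and \<open>v\<^sub>2 = v - v\<^sub>1\<close>, the slope condition becomes
  \<open>2 (d v\<^sub>1 - d\<^sub>1 v) = m d\<^sub>1 d\<^sub>2 d\<close>. Hence \<open>d\<close> divides \<open>2 v d\<^sub>1\<close>, so \<open>d / gcd(d, 2v)\<close> divides \<open>d\<^sub>1\<close>: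
  there is no split when \<open>gcd(d, 2v) = 1\<close>, and when \<open>gcd(d, 2v) = 2\<close> the only candidate is
  \<open>d\<^sub>1 = d/2\<close>, which works exactly when \<open>v + m (d/2)\<^sup>2\<close> is even. When \<open>g = gcd(d, 2v) \<ge> 3\<close>,
  writing \<open>d = g a\<close>, the choice \<open>d\<^sub>1 = 2a\<close> always works.\<close>

lemma equal_slopes_iff:
  fixes m d1 d2 v1 v2 :: int
  assumes "d1 > 0" and "d2 > 0"
  shows "(real_of_int v1 - real_of_int m / 2 * real_of_int d1 * real_of_int d2) / real_of_int d1 =
         (real_of_int v2 + real_of_int m / 2 * real_of_int d1 * real_of_int d2) / real_of_int d2
     \<longleftrightarrow> 2 * (d2 * v1 - d1 * v2) = m * d1 * d2 * (d1 + d2)"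
proof -
  have "(real_of_int v1 - real_of_int m / 2 * real_of_int d1 * real_of_int d2) / real_of_int d1 =
        (real_of_int v2 + real_of_int m / 2 * real_of_int d1 * real_of_int d2) / real_of_int d2
     \<longleftrightarrow> real_of_int (2 * (d2 * v1 - d1 * v2)) = real_of_int (m * d1 * d2 * (d1 + d2))"
    using assms by (simp add: field_simps) (auto simp: algebra_simps)
  then show ?thesis
    by (simp only: of_int_eq_iff)
qed

definition has_equal_slope_split :: "int \<Rightarrow> int \<Rightarrow> int \<Rightarrow> bool" where
  "has_equal_slope_split m d v \<longleftrightarrow>
     (\<exists>d1 v1. 0 < d1 \<and> d1 < d \<and> 2 * (d * v1 - d1 * v) = m * d1 * (d - d1) * d)"

lemma decomposition_iff_has_equal_slope_split:
  fixes m d v :: int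
  shows "(\<exists>d1 v1 d2 v2 :: int.
            d = d1 + d2 \<and> v = v1 + v2 \<and> d1 > 0 \<and> d2 > 0 \<and>
            (real_of_int v1 - real_of_int m / 2 * real_of_int d1 * real_of_int d2) / real_of_int d1 =
            (real_of_int v2 + real_of_int m / 2 * real_of_int d1 * real_of_int d2) / real_of_int d2)
    \<longleftrightarrow> has_equal_slope_split m d v"
proof -
  have split_eq_iff: "2 * ((d - d1) * v1 - d1 * (v - v1)) = m * d1 * (d - d1) * (d1 + (d - d1))
     \<longleftrightarrow> 2 * (d * v1 - d1 * v) = m * d1 * (d - d1) * d" for d1 v1
    by (simp add: algebra_simps)
  show ?thesis
    unfolding has_equal_slope_split_def
  proof (intro iffI; elim exE conjE)
    fix d1 v1 d2 v2 :: int
    assume "d = d1 + d2" "v = v1 + v2" "d1 > 0" "d2 > 0"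
      and slopes: "(real_of_int v1 - real_of_int m / 2 * real_of_int d1 * real_of_int d2) / real_of_int d1 =
           (real_of_int v2 + real_of_int m / 2 * real_of_int d1 * real_of_int d2) / real_of_int d2"
    have "2 * (d2 * v1 - d1 * v2) = m * d1 * d2 * (d1 + d2)"
      using slopes equal_slopes_iff[OF \<open>d1 > 0\<close> \<open>d2 > 0\<close>] by blast
    with \<open>d = d1 + d2\<close> \<open>v = v1 + v2\<close> have "2 * (d * v1 - d1 * v) = m * d1 * (d - d1) * d"
      by (simp add: algebra_simps)
    with \<open>d = d1 + d2\<close> \<open>d1 > 0\<close> \<open>d2 > 0\<close>
    show "\<exists>d1 v1. 0 < d1 \<and> d1 < d \<and> 2 * (d * v1 - d1 * v) = m * d1 * (d - d1) * d"
      by (intro exI[of _ d1] exI[of _ v1]) simp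
  next
    fix d1 v1 :: int
    assume "0 < d1" "d1 < d" "2 * (d * v1 - d1 * v) = m * d1 * (d - d1) * d"
    then show "\<exists>d1 v1 d2 v2 :: int.
            d = d1 + d2 \<and> v = v1 + v2 \<and> d1 > 0 \<and> d2 > 0 \<and>
            (real_of_int v1 - real_of_int m / 2 * real_of_int d1 * real_of_int d2) / real_of_int d1 =
            (real_of_int v2 + real_of_int m / 2 * real_of_int d1 * real_of_int d2) / real_of_int d2"
      using split_eq_iff[of d1 v1] equal_slopes_iff[of d1 "d - d1" v1 m "v - v1"]
      by (intro exI[of _ d1] exI[of _ v1] exI[of _ "d - d1"] exI[of _ "v - v1"]) auto
  qed
qed

lemma div_gcd_dvd_if_dvd_mult:
  fixes a b c :: "'a :: semiring_gcd"
  assumes "a dvd b * c" and "a \<noteq> 0"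
  shows "a div gcd a b dvd c"
proof -
  define g where "g = gcd a b"
  have "g \<noteq> 0"
    using assms(2) by (simp add: g_def)
  have "a div g * g dvd (b div g * c) * g"
    using assms(1) by (simp add: g_def ac_simps)
  then have "a div g dvd b div g * c"
    using \<open>g \<noteq> 0\<close> by simp
  moreover have "coprime (a div g) (b div g)"
    using assms(2) by (simp add: g_def div_gcd_coprime)
  ultimately show ?thesis
    by (simp add: g_def coprime_dvd_mult_right_iff)
qed

lemma equal_slope_split_dvd:
  fixes m d v d1 v1 :: int
  assumes "2 * (d * v1 - d1 * v) = m * d1 * (d - d1) * d" and "d \<noteq> 0"
  shows "d div gcd d (2 * v) dvd d1"
proof -
  have "2 * v * d1 = d * (2 * v1 - m * d1 * (d - d1))"
    using assms(1) by (simp add: algebra_simps)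
  then have "d dvd 2 * v * d1"
    by simp
  then show ?thesis
    using assms(2) by (rule div_gcd_dvd_if_dvd_mult)
qed

lemma equal_slope_split_at_half_iff:
  fixes m d e v :: int
  assumes "d = 2 * e" and "e \<noteq> 0"
  shows "(\<exists>v1. 2 * (d * v1 - e * v) = m * e * (d - e) * d) \<longleftrightarrow> even (v + m * e\<^sup>2)"
proof -
  have "2 * (d * v1 - e * v) = m * e * (d - e) * d \<longleftrightarrow> v + m * e\<^sup>2 = 2 * v1" for v1
  proof -
    have "2 * (d * v1 - e * v) - m * e * (d - e) * d = 2 * e * (2 * v1 - (v + m * e\<^sup>2))"
      by (simp add: assms(1) algebra_simps power2_eq_square)
    then show ?thesis
      using assms(2) by (smt (verit) mult_eq_0_iff)
  qed
  then show ?thesis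
    by (simp add: dvd_def)
qed

lemma equal_slope_split_gcd_eq_2_imp_half:
  fixes m d v d1 v1 :: int
  assumes "2 * (d * v1 - d1 * v) = m * d1 * (d - d1) * d"
    and "0 < d1" and "d1 < d" and "gcd d (2 * v) = 2"
  shows "d = 2 * d1"
proof -
  obtain e where d: "d = 2 * e"
    using assms(4) by (metis gcd_dvd1 dvdE)
  have "e > 0"
    using assms(2,3) by (simp add: d)
  have "e dvd d1"
    using equal_slope_split_dvd[OF assms(1)] assms(2-4) by (simp add: d)
  then obtain k where k: "d1 = e * k" ..
  have "0 < k"
    using assms(2) \<open>e > 0\<close> by (simp add: k zero_less_mult_iff)
  moreover have "e * k < e * 2"
    using assms(3) by (simp add: k d)
  then have "k < 2"
    using \<open>e > 0\<close> by simp
  ultimately show ?thesis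
    by (simp add: k d)
qed

lemma has_equal_slope_split_if_gcd_ge_3:
  fixes m d v :: int
  assumes "d > 0" and "gcd d (2 * v) \<ge> 3"
  shows "has_equal_slope_split m d v"
proof -
  define g where "g = gcd d (2 * v)"
  obtain a b where ab: "d = g * a" "2 * v = g * b"
    unfolding g_def by (meson dvd_def gcd_dvd1 gcd_dvd2)
  have "g \<ge> 3"
    using assms(2) by (simp add: g_def)
  then have "a > 0"
    using ab(1) assms(1) by (simp add: zero_less_mult_iff)
  then have "2 * a < d"
    using ab(1) \<open>g \<ge> 3\<close> by simp
  moreover have "2 * (d * (b + m * (g - 2) * a\<^sup>2) - 2 * a * v) = m * (2 * a) * (d - 2 * a) * d"
    using ab by (simp add: algebra_simps power2_eq_square)
  ultimately show ?thesis
    unfolding has_equal_slope_split_def using \<open>a > 0\<close>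
    by (intro exI[of _ "2 * a"] exI[of _ "b + m * (g - 2) * a\<^sup>2"]) auto
qed

lemma has_equal_slope_split_iff:
  fixes m d v :: int
  assumes "d > 0"
  shows "has_equal_slope_split m d v \<longleftrightarrow>
         gcd d (2 * v) \<ge> 3 \<or> (gcd d (2 * v) = 2 \<and> even (v + m * (d div 2)\<^sup>2))"
proof
  assume "has_equal_slope_split m d v"
  then obtain d1 v1 where "0 < d1" "d1 < d"
    and split: "2 * (d * v1 - d1 * v) = m * d1 * (d - d1) * d"
    unfolding has_equal_slope_split_def by blast
  define g where "g = gcd d (2 * v)"
  have "g > 0"
    using assms by (simp add: g_def)
  have "d div g dvd d1"
    using equal_slope_split_dvd[OF split] assms by (simp add: g_def)
  then have "g \<noteq> 1"
    using \<open>0 < d1\<close> \<open>d1 < d\<close> zdvd_imp_le by fastforce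
  moreover have "even (v + m * (d div 2)\<^sup>2)" if "g = 2"
  proof -
    have "d = 2 * d1"
      using equal_slope_split_gcd_eq_2_imp_half[OF split \<open>0 < d1\<close> \<open>d1 < d\<close>] \<open>g = 2\<close>
      by (simp add: g_def)
    moreover from split have "\<exists>v1. 2 * (d * v1 - d1 * v) = m * d1 * (d - d1) * d" ..
    ultimately have "even (v + m * d1\<^sup>2)"
      using equal_slope_split_at_half_iff \<open>0 < d1\<close> by simp
    then show ?thesis
      by (simp add: \<open>d = 2 * d1\<close>)
  qed
  ultimately show "gcd d (2 * v) \<ge> 3 \<or> (gcd d (2 * v) = 2 \<and> even (v + m * (d div 2)\<^sup>2))"
    using \<open>g > 0\<close> unfolding g_def[symmetric] by auto
next
  assume "gcd d (2 * v) \<ge> 3 \<or> (gcd d (2 * v) = 2 \<and> even (v + m * (d div 2)\<^sup>2))"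
  then show "has_equal_slope_split m d v"
  proof
    assume "gcd d (2 * v) \<ge> 3"
    with assms show ?thesis
      by (rule has_equal_slope_split_if_gcd_ge_3)
  next
    assume half: "gcd d (2 * v) = 2 \<and> even (v + m * (d div 2)\<^sup>2)"
    then obtain e where d: "d = 2 * e"
      by (metis gcd_dvd1 dvdE)
    have "0 < e" "e < d"
      using assms by (simp_all add: d)
    moreover have "even (v + m * e\<^sup>2)"
      using half by (simp add: d)
    then obtain v1 where "2 * (d * v1 - e * v) = m * e * (d - e) * d"
      using equal_slope_split_at_half_iff[OF d] \<open>0 < e\<close> by blast
    ultimately show ?thesis
      unfolding has_equal_slope_split_def by blast
  qed
qed

lemma gcd_mod_4_cases_iff:
  fixes d v :: int
  shows "(gcd d v = 1 \<and> d mod 4 \<noteq> 2) \<or> (gcd d v = 2 \<and> d mod 4 = 2) \<longleftrightarrow>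
         gcd d (2 * v) = 1 \<or> (gcd d (2 * v) = 2 \<and> odd (v + d div 2))"
proof (cases "even d")
  case True
  then obtain e where d: "d = 2 * e" ..
  have gcd_double: "gcd d (2 * v) = 2 * gcd e v"
    using gcd_mult_distrib_int[of 2 e v] by (simp add: d)
  have "gcd d (2 * v) = 1 \<or> (gcd d (2 * v) = 2 \<and> odd (v + d div 2)) \<longleftrightarrow>
        coprime e v \<and> odd (v + e)"
    using gcd_double by (simp add: d coprime_iff_gcd_eq_1) presburger
  moreover have "gcd d v = 1 \<longleftrightarrow> odd v \<and> coprime e v"
    unfolding d by (simp add: coprime_iff_gcd_eq_1[symmetric])
  moreover have "gcd d v = 2 \<longleftrightarrow> even v \<and> coprime e v" if "odd e"
  proof (cases "even v")
    case True
    then obtain w where v: "v = 2 * w" ..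
    have "gcd d v = 2 * gcd e w"
      using gcd_mult_distrib_int[of 2 e w] by (simp add: d v)
    moreover have "coprime e v \<longleftrightarrow> coprime e w"
      using that by (simp add: v)
    ultimately show ?thesis
      using True by (auto simp: coprime_iff_gcd_eq_1)
  next
    case False
    then have "\<not> 2 dvd gcd d v"
      by (meson gcd_dvd2 dvd_trans)
    with False show ?thesis
      by (metis dvd_refl)
  qed
  moreover have "d mod 4 = 2 \<longleftrightarrow> odd e"
    unfolding d by presburger
  ultimately show ?thesis
    by (cases "even e") auto
next
  case False
  then have "gcd d (2 * v) = gcd d v"
    by (simp add: gcd_mult_right_left_cancel)
  moreover have "gcd d v \<noteq> 2"
    using False by (metis gcd_dvd1)
  moreover have "d mod 4 \<noteq> 2"
    using False by presburger
  ultimately show ?thesis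
    by auto
qed

theorem lemma8p7:
  fixes m d v :: int
  assumes "odd m" and "d > 0"
  shows "(\<not> (\<exists>d1 v1 d2 v2 :: int.
              d = d1 + d2 \<and> v = v1 + v2 \<and> d1 > 0 \<and> d2 > 0 \<and>
              (real_of_int v1 - real_of_int m / 2 * real_of_int d1 * real_of_int d2) / real_of_int d1 =
              (real_of_int v2 + real_of_int m / 2 * real_of_int d1 * real_of_int d2) / real_of_int d2))
    \<longleftrightarrow> ((gcd d v = 1 \<and> \<not> d mod 4 = 2) \<or> (gcd d v = 2 \<and> d mod 4 = 2))"
proof -
  define g where "g = gcd d (2 * v)"
  have "g > 0"
    using assms(2) by (simp add: g_def)
  moreover have "even (v + m * (d div 2)\<^sup>2) \<longleftrightarrow> even (v + d div 2)"
    using assms(1) by simp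
  ultimately show ?thesis
    unfolding decomposition_iff_has_equal_slope_split has_equal_slope_split_iff[OF assms(2)]
      gcd_mod_4_cases_iff g_def[symmetric]
    by auto
qed

end
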